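(* Let $C_1,\dots,C_m\subseteq\mathbb{R}^L$ be closed convex sets (the convex feasibility problem $T$), let $\mathrm{Prox}_T:\mathbb{R}^L\to[0,\infty)$ be a proximity function, let $\mathcal{A}:\mathbb{R}^L\to\mathbb{R}^L$ be an algorithmic operator, and let $\phi:\mathbb{R}^L\to\mathbb{R}$ be a target function. Assume that the basic algorithm defined by $\mathcal{A}$ is strongly perturbation resilient and that there is $\varepsilon>0$ such that for every $x^0\in\mathbb{R}^L$ the $\varepsilon$-output of the sequence $x^{k+1}=\mathcal{A}(x^k)$ exists. Let $\{\eta_\ell\}_{\ell=0}^\infty$ be a summable sequence of positive real numbers, let $\{N_k\}_{k=0}^\infty$ be a sequence of positive integers bounded by some positive integer $N$, and let $\bar y\in\mathbb{R}^L$. Let $\{y^k\}_{k=0}^\infty$ be any sequence produced by the following procedure (Algorithm 1): set $y^0=\bar y$ and a counter $\ell=0$; for each $k\ge 0$, set $y^{k,0}=y^k$, and for $n=0,1,\dots,N_k-1$ choose any $v^{k,n}\in\mathcal{B}_{\eta_\ell,\phi}(y^{k,n})$, set $y^{k,n+1}=y^{k,n}+v^{k,n}$ and increase $\ell$ by $1$; then set $y^{k+1}=\mathcal{A}(y^{k,N_k})$. Then for every $\varepsilon'>\varepsilon$, the $\varepsilon'$-output of the sequence $\{y^k\}_{k=0}^\infty$ with respect to $(T,\mathrm{Prox}_T)$ exists.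
   Context: Given $\varepsilon>0$ and a sequence $\{x^k\}_{k=0}^\infty\subseteq\mathbb{R}^L$, an element $x^K$ is the $\varepsilon$-output of the sequence (with respect to $(T,\mathrm{Prox}_T)$) if $\mathrm{Prox}_T(x^K)\le\varepsilon$ and $\mathrm{Prox}_T(x^k)>\varepsilon$ for all $0\le k<K$. The basic algorithm $x^{k+1}=\mathcal{A}(x^k)$ is strongly perturbation resilient if (i) there exists $\varepsilon>0$ such that the $\varepsilon$-output of $\{x^k\}$ exists for every $x^0\in\mathbb{R}^L$; and (ii) for every $\varepsilon>0$ for which the $\varepsilon$-output of $\{x^k\}$ exists for every $x^0$, the $\varepsilon'$-output also exists for every $\varepsilon'>\varepsilon$ and every sequence $\{y^k\}$ generated by $y^{k+1}=\mathcal{A}(y^k+\beta_k v^k)$, where $\{v^k\}\subseteq\mathbb{R}^L$ is bounded and $\beta_k\ge0$ with $\sum_k\beta_k<\infty$. For $\delta>0$ and $y\in\mathbb{R}^L$, the nonascending $\delta$-ball is $\mathcal{B}_{\delta,\phi}(y):=\{d\in\mathbb{R}^L:\|d\|\le\delta,\ \phi(y+d)\le\phi(y)\}$ ($\|\cdot\|$ the Euclidean norm). *)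

theory Defs
  imports "HOL-Analysis.Analysis"
begin

definition is_eps_output :: "('a \<Rightarrow> real) \<Rightarrow> real \<Rightarrow> (nat \<Rightarrow> 'a) \<Rightarrow> nat \<Rightarrow> bool" where
  "is_eps_output Prox eps x K \<longleftrightarrow> Prox (x K) \<le> eps \<and> (\<forall>k<K. Prox (x k) > eps)"

definition eps_output_exists :: "('a \<Rightarrow> real) \<Rightarrow> real \<Rightarrow> (nat \<Rightarrow> 'a) \<Rightarrow> bool" where
  "eps_output_exists Prox eps x \<longleftrightarrow> (\<exists>K. is_eps_output Prox eps x K)"

definition strongly_perturbation_resilient ::
  "('a::real_normed_vector \<Rightarrow> real) \<Rightarrow> ('a \<Rightarrow> 'a) \<Rightarrow> bool" where
  "strongly_perturbation_resilient Prox A \<longleftrightarrow>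
     (\<exists>eps>0. \<forall>x0. eps_output_exists Prox eps (\<lambda>k. (A ^^ k) x0)) \<and>
     (\<forall>eps>0. (\<forall>x0. eps_output_exists Prox eps (\<lambda>k. (A ^^ k) x0)) \<longrightarrow>
        (\<forall>eps'>eps. \<forall>(y::nat \<Rightarrow> 'a) (v::nat \<Rightarrow> 'a) (\<beta>::nat \<Rightarrow> real).
            bounded (range v) \<and> (\<forall>k. \<beta> k \<ge> 0) \<and> summable \<beta> \<and>
            (\<forall>k. y (Suc k) = A (y k + \<beta> k *\<^sub>R v k))
            \<longrightarrow> eps_output_exists Prox eps' y))"

definition nonasc_ball :: "real \<Rightarrow> ('a::real_normed_vector \<Rightarrow> real) \<Rightarrow> 'a \<Rightarrow> 'a set" where
  "nonasc_ball \<delta> \<phi> y = {d. norm d \<le> \<delta> \<and> \<phi> (y + d) \<le> \<phi> y}"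

text \<open>Algorithm 1: y k are the outer iterates, yy k n the inner iterates y^{k,n},
  v k n the perturbations v^{k,n}; the counter value at inner step (k,n) is
  (sum of N j for j<k) + n.\<close>
definition algorithm1 ::
  "('a::real_normed_vector \<Rightarrow> 'a) \<Rightarrow> ('a \<Rightarrow> real) \<Rightarrow> (nat \<Rightarrow> real) \<Rightarrow> (nat \<Rightarrow> nat) \<Rightarrow> 'a
   \<Rightarrow> (nat \<Rightarrow> 'a) \<Rightarrow> (nat \<Rightarrow> nat \<Rightarrow> 'a) \<Rightarrow> (nat \<Rightarrow> nat \<Rightarrow> 'a) \<Rightarrow> bool" where
  "algorithm1 A \<phi> \<eta> N ybar y yy v \<longleftrightarrow>
     y 0 = ybar \<and>
     (\<forall>k. yy k 0 = y k) \<and>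
     (\<forall>k. \<forall>n<N k. v k n \<in> nonasc_ball (\<eta> ((\<Sum>j<k. N j) + n)) \<phi> (yy k n)
                  \<and> yy k (Suc n) = yy k n + v k n) \<and>
     (\<forall>k. y (Suc k) = A (yy k (N k)))"

end

theory Submission
  imports Defs
begin

text \<open>The N k inner perturbations of outer step k have total norm at most the block sum
  of \<eta> over the counter values used in that step; these block sums are summable because
  \<eta> is, and dividing the total displacement by its block sum gives a bounded direction.
  Algorithm 1 is therefore a bounded, summable perturbation of the basic algorithm, and
  strong perturbation resilience applies.\<close>

lemma sum_lessThan_add:
  fixes f :: "nat \<Rightarrow> 'b::comm_monoid_add"
  shows "(\<Sum>i<a + b. f i) = (\<Sum>i<a. f i) + (\<Sum>n<b. f (a + n))"
  by (induction b) (simp_all add: add.assoc)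

lemma summable_block_sums:
  fixes \<eta> :: "nat \<Rightarrow> real" and N :: "nat \<Rightarrow> nat"
  assumes nonneg: "\<And>l. 0 \<le> \<eta> l" and "summable \<eta>"
  shows "summable (\<lambda>k. \<Sum>n<N k. \<eta> ((\<Sum>j<k. N j) + n))"
proof (rule summableI_nonneg_bounded[where x = "suminf \<eta>"])
  show "0 \<le> (\<Sum>n<N k. \<eta> ((\<Sum>j<k. N j) + n))" for k
    using nonneg by (simp add: sum_nonneg)
  have partial: "(\<Sum>k<K. \<Sum>n<N k. \<eta> ((\<Sum>j<k. N j) + n)) = (\<Sum>l<(\<Sum>j<K. N j). \<eta> l)" for K
    by (induction K) (simp_all add: sum_lessThan_add)
  show "(\<Sum>k<K. \<Sum>n<N k. \<eta> ((\<Sum>j<k. N j) + n)) \<le> suminf \<eta>" for K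
    unfolding partial using assms by (intro sum_le_suminf) auto
qed

lemma bounded_rescaled_displacements:
  fixes x z :: "nat \<Rightarrow> 'a::real_normed_vector"
  assumes "\<And>k. norm (z k - x k) \<le> \<beta> k" and "\<And>k. \<beta> k > 0"
  obtains w where "bounded (range w)" and "\<And>k. z k = x k + \<beta> k *\<^sub>R w k"
proof
  define w where "w k = (1 / \<beta> k) *\<^sub>R (z k - x k)" for k
  have "norm (w k) \<le> 1" for k
    using assms[of k] by (simp add: w_def divide_le_eq_1)
  then show "bounded (range w)"
    unfolding bounded_iff by blast
  show "z k = x k + \<beta> k *\<^sub>R w k" for k
    using assms(2)[of k] by (simp add: w_def)
qed

lemma algorithm1_displacement_bound:
  assumes "algorithm1 A \<phi> \<eta> N ybar y yy v"
  shows "norm (yy k (N k) - y k) \<le> (\<Sum>n<N k. \<eta> ((\<Sum>j<k. N j) + n))"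
proof -
  have start: "yy k 0 = y k"
    and inner: "\<And>n. n < N k \<Longrightarrow> norm (v k n) \<le> \<eta> ((\<Sum>j<k. N j) + n) \<and> yy k (Suc n) = yy k n + v k n"
    using assms unfolding algorithm1_def nonasc_ball_def by auto
  have "n \<le> N k \<Longrightarrow> yy k n - y k = (\<Sum>i<n. v k i)" for n
    by (induction n) (use start inner in auto)
  then have "norm (yy k (N k) - y k) = norm (\<Sum>n<N k. v k n)"
    by simp
  also have "\<dots> \<le> (\<Sum>n<N k. norm (v k n))"
    by (rule norm_sum)
  also have "\<dots> \<le> (\<Sum>n<N k. \<eta> ((\<Sum>j<k. N j) + n))"
    using inner by (intro sum_mono) auto
  finally show ?thesis .
qed

lemma strongly_perturbation_resilientD:
  assumes "strongly_perturbation_resilient Prox A"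
    and "eps > 0" and "\<forall>x0. eps_output_exists Prox eps (\<lambda>k. (A ^^ k) x0)"
    and "eps' > eps" and "bounded (range v)" and "\<And>k. \<beta> k \<ge> 0" and "summable \<beta>"
    and "\<And>k. y (Suc k) = A (y k + \<beta> k *\<^sub>R v k)"
  shows "eps_output_exists Prox eps' y"
  using assms unfolding strongly_perturbation_resilient_def by blast

theorem lemma1:
  fixes C :: "nat \<Rightarrow> 'a::euclidean_space set" and m :: nat
    and Prox :: "'a \<Rightarrow> real" and A :: "'a \<Rightarrow> 'a" and \<phi> :: "'a \<Rightarrow> real"
    and eps :: real and \<eta> :: "nat \<Rightarrow> real" and N :: "nat \<Rightarrow> nat" and Nmax :: nat
    and ybar :: 'a and y :: "nat \<Rightarrow> 'a" and yy v :: "nat \<Rightarrow> nat \<Rightarrow> 'a"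
  assumes "\<forall>i<m. closed (C i) \<and> convex (C i)"
    and "\<forall>x. Prox x \<ge> 0"
    and "strongly_perturbation_resilient Prox A"
    and "eps > 0"
    and "\<forall>x0. eps_output_exists Prox eps (\<lambda>k. (A ^^ k) x0)"
    and "\<forall>l. \<eta> l > 0" and "summable \<eta>"
    and "Nmax > 0" and "\<forall>k. 0 < N k \<and> N k \<le> Nmax"
    and "algorithm1 A \<phi> \<eta> N ybar y yy v"
  shows "\<forall>eps'>eps. eps_output_exists Prox eps' y"
proof (intro allI impI)
  fix eps' :: real
  assume "eps' > eps"
  define \<beta> where "\<beta> k = (\<Sum>n<N k. \<eta> ((\<Sum>j<k. N j) + n))" for k
  have \<beta>_pos: "\<beta> k > 0" for k
    unfolding \<beta>_def using assms(6,9) by (intro sum_pos) auto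
  obtain w where "bounded (range w)" and step: "\<And>k. yy k (N k) = y k + \<beta> k *\<^sub>R w k"
    using bounded_rescaled_displacements[of "\<lambda>k. yy k (N k)" y \<beta>]
      algorithm1_displacement_bound[OF assms(10)] \<beta>_pos
    unfolding \<beta>_def by blast
  have "\<beta> k \<ge> 0" for k
    using \<beta>_pos[of k] by simp
  moreover have "summable \<beta>"
    unfolding \<beta>_def using assms(6,7) by (intro summable_block_sums) (auto intro: less_imp_le)
  moreover have "y (Suc k) = A (y k + \<beta> k *\<^sub>R w k)" for k
    using assms(10) step unfolding algorithm1_def by simp
  ultimately show "eps_output_exists Prox eps' y"
    by (rule strongly_perturbation_resilientD[OF assms(3-5) \<open>eps' > eps\<close> \<open>bounded (range w)\<close>])
qed

end
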